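(* Let $K$ be a non-Archimedean locally compact field of characteristic $p>0$ with group of 1-units $U=1+M_K$. Let $f:U\to U$ be a locally analytic group endomorphism with $f(1+x)=\sum_{n=0}^{\infty}a_nx^n$ for all $x\in M_K$, where $\sum a_nx^n\in 1+x\mathbb{F}_p[[x]]$. If the sequence $\{a_n\}_{n\ge0}$ is ultimately periodic, then $f(1+x)=(1+x)^N$ for some integer $N$.
   Context: $M_K$ is the maximal ideal of the ring of integers $R_K$ of $K$; with constant field $\mathbb{F}$ of order $q$ and uniformizer $\pi$, $K=\mathbb{F}((\pi))$, $U=1+\pi\mathbb{F}[[\pi]]$, and $|x|=q^{-v(x)}$. A continuous function $f$ on a ball $B_{\alpha,t}=\{u\in R_K:|u-\alpha|\le t\}$, $t=|\rho|$, is analytic there if $f(u)=\sum_{n\ge0}c_n\left(\frac{u-\alpha}{\rho}\right)^n$ with $c_n\in K$, $c_n\to0$; $f:U\to K$ is locally analytic if each $\alpha\in U$ has a ball $B_{\alpha,t_\alpha}\subset U$, $t_\alpha>0$, on which $f$ is analytic. A sequence $\{s_n\}$ is ultimately periodic if there are integers $r>0$, $w\ge0$ with $s_{n+r}=s_n$ for all $n\ge w$. *)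

theory Defs
  imports "HOL-Computational_Algebra.Formal_Laurent_Series"
begin

text \<open>K = F((pi)) is modelled as the type of formal Laurent series over a finite field F
  (type class {field, finite}); the uniformizer is fls_X and v = fls_subdegree (v(0) = infinity).\<close>

definition maxideal :: "('a::{field,finite}) fls set" where
  "maxideal = {x. x = 0 \<or> fls_subdegree x \<ge> 1}"

definition intring :: "('a::{field,finite}) fls set" where
  "intring = {x. x = 0 \<or> fls_subdegree x \<ge> 0}"

definition one_units :: "('a::{field,finite}) fls set" where
  "one_units = {1 + x | x. x \<in> maxideal}"

definition kball :: "('a::{field,finite}) fls \<Rightarrow> 'a fls \<Rightarrow> 'a fls set" where
  "kball \<alpha> \<rho> = {u \<in> intring. u - \<alpha> = 0 \<or> fls_subdegree (u - \<alpha>) \<ge> fls_subdegree \<rho>}"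

definition fls_tendsto :: "(nat \<Rightarrow> ('a::{field,finite}) fls) \<Rightarrow> 'a fls \<Rightarrow> bool" where
  "fls_tendsto s L \<longleftrightarrow>
     (\<forall>M::int. \<exists>N. \<forall>n\<ge>N. L - s n = 0 \<or> fls_subdegree (L - s n) \<ge> M)"

definition analytic_on_kball ::
  "(('a::{field,finite}) fls \<Rightarrow> 'a fls) \<Rightarrow> 'a fls \<Rightarrow> 'a fls \<Rightarrow> bool" where
  "analytic_on_kball f \<alpha> \<rho> \<longleftrightarrow> \<rho> \<noteq> 0 \<and>
     (\<exists>c :: nat \<Rightarrow> 'a fls. fls_tendsto c 0 \<and>
        (\<forall>u \<in> kball \<alpha> \<rho>.
           fls_tendsto (\<lambda>N. \<Sum>n<N. c n * ((u - \<alpha>) / \<rho>) ^ n) (f u)))"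

definition locally_analytic_U :: "(('a::{field,finite}) fls \<Rightarrow> 'a fls) \<Rightarrow> bool" where
  "locally_analytic_U f \<longleftrightarrow>
     (\<forall>\<alpha> \<in> one_units. \<exists>\<rho>. \<rho> \<noteq> 0 \<and> kball \<alpha> \<rho> \<subseteq> one_units \<and> analytic_on_kball f \<alpha> \<rho>)"

definition ultimately_periodic :: "(nat \<Rightarrow> 'b) \<Rightarrow> bool" where
  "ultimately_periodic s \<longleftrightarrow> (\<exists>r w. r > 0 \<and> (\<forall>n\<ge>w. s (n + r) = s n))"

end

theory Submission
  imports Defs
begin
unbundle fps_syntax

text \<open>If the coefficients of \<open>A\<close> are periodic from index \<open>w\<close> on with period \<open>r\<close>, then
  \<open>A \<cdot> (1 - X\<^sup>r)\<close> is a polynomial \<open>p\<close>, so \<open>f(u) (1 - (u - 1)\<^sup>r) = p(u - 1)\<close> on the 1-units: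
  \<open>f\<close> is a rational function \<open>P/Q\<close> there. Write \<open>P = X\<^sup>a P\<^sub>1\<close>, \<open>Q = X\<^sup>b Q\<^sub>1\<close> with
  \<open>P\<^sub>1(0) Q\<^sub>1(0) \<noteq> 0\<close>. Multiplicativity gives \<open>P\<^sub>1(uv) Q\<^sub>1(u) Q\<^sub>1(v) = P\<^sub>1(u) P\<^sub>1(v) Q\<^sub>1(uv)\<close>;
  for fixed \<open>v\<close> this is a polynomial identity in \<open>u\<close> on an infinite set, hence valid at
  \<open>u = 0\<close>, which forces \<open>P\<^sub>1(v) = Q\<^sub>1(v)\<close>. Thus \<open>f(u) = u\<^sup>a\<^sup>-\<^sup>b\<close>.\<close>

lemma ultimately_periodic_times_one_minus_X_power:
  fixes A :: "'a::comm_ring_1 fps"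
  assumes "ultimately_periodic (fps_nth A)"
  obtains r p where "r > 0" "A * (1 - fps_X ^ r) = fps_of_poly p"
proof -
  obtain r w where "r > 0" and periodic: "\<forall>n\<ge>w. A $ (n + r) = A $ n"
    using assms unfolding ultimately_periodic_def by blast
  define T where "T = A * (1 - fps_X ^ r)"
  have "T $ n = 0" if "w + r \<le> n" for n
  proof -
    have "T $ n = A $ n - A $ (n - r)"
      using that by (simp add: T_def right_diff_distrib fps_X_power_mult_right_nth)
    moreover have "A $ (n - r + r) = A $ (n - r)"
      using periodic[rule_format, of "n - r"] that by simp
    ultimately show ?thesis using that by simp
  qed
  then have "T = fps_of_poly (truncate_fps (w + r) T)"
    by (intro fps_ext) (simp add: coeff_truncate_fps)
  with \<open>r > 0\<close> show thesis using that T_def by blast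
qed

lemma fps_to_fls_compose_fps_of_poly:
  fixes b :: "'a::field fps"
  assumes "b $ 0 = 0"
  shows "fps_to_fls (fps_of_poly p oo b) = poly (map_poly fls_const p) (fps_to_fls b)"
proof (induction p)
  case (pCons c p)
  then show ?case
    using assms by (simp add: fps_of_poly_pCons map_poly_pCons fps_compose_add_distrib
        fps_compose_mult_distrib fls_times_fps_to_fls)
qed simp

lemma poly_eq_if_multiplicative_ratio:
  fixes P Q :: "'a::idom poly"
  assumes "infinite S" "poly P 0 \<noteq> 0" "poly Q 0 \<noteq> 0"
    and cross: "\<And>u v. u \<in> S \<Longrightarrow> v \<in> S \<Longrightarrow>
      poly P (u * v) * poly Q u * poly Q v = poly P u * poly P v * poly Q (u * v)"
    and "v \<in> S"
  shows "poly P v = poly Q v"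
proof -
  define G where
    "G = pcompose P [:0, v:] * Q * [:poly Q v:] - P * [:poly P v:] * pcompose Q [:0, v:]"
  have "S \<subseteq> {u. poly G u = 0}"
    using cross[OF _ \<open>v \<in> S\<close>] by (auto simp: G_def poly_pcompose algebra_simps)
  then have "G = 0"
    using \<open>infinite S\<close> poly_roots_finite finite_subset by blast
  then have "poly G 0 = 0" by simp
  then have "poly P 0 * poly Q 0 * (poly Q v - poly P v) = 0"
    by (simp add: G_def poly_pcompose algebra_simps)
  then show ?thesis using assms(2,3) by simp
qed

lemma multiplicative_rational_function_eq_power_int:
  fixes f :: "'a::field \<Rightarrow> 'a" and P Q :: "'a poly"
  assumes "infinite S" and mult_closed: "\<And>u v. u \<in> S \<Longrightarrow> v \<in> S \<Longrightarrow> u * v \<in> S"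
    and "0 \<notin> S"
    and rational: "\<And>u. u \<in> S \<Longrightarrow> f u * poly Q u = poly P u"
    and Q_nonzero: "\<And>u. u \<in> S \<Longrightarrow> poly Q u \<noteq> 0"
    and f_nonzero: "\<And>u. u \<in> S \<Longrightarrow> f u \<noteq> 0"
    and f_mult: "\<And>u v. u \<in> S \<Longrightarrow> v \<in> S \<Longrightarrow> f (u * v) = f u * f v"
  shows "\<exists>N::int. \<forall>u\<in>S. f u = u powi N"
proof -
  obtain s where "s \<in> S" using infinite_imp_nonempty[OF \<open>infinite S\<close>] by blast
  then have "P \<noteq> 0" "Q \<noteq> 0" using rational Q_nonzero f_nonzero by force+
  obtain P1 where P: "P = [:0, 1:] ^ order 0 P * P1" and "\<not> [:0, 1:] dvd P1"
    using order_decomp[OF \<open>P \<noteq> 0\<close>, of 0] by auto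
  obtain Q1 where Q: "Q = [:0, 1:] ^ order 0 Q * Q1" and "\<not> [:0, 1:] dvd Q1"
    using order_decomp[OF \<open>Q \<noteq> 0\<close>, of 0] by auto
  define a where "a = order 0 P"
  define b where "b = order 0 Q"
  have P_eq: "poly P u = u ^ a * poly P1 u" and Q_eq: "poly Q u = u ^ b * poly Q1 u" for u
    unfolding a_def b_def by (subst P, simp, subst Q, simp)
  have "poly P1 0 \<noteq> 0" "poly Q1 0 \<noteq> 0"
    using \<open>\<not> [:0, 1:] dvd P1\<close> \<open>\<not> [:0, 1:] dvd Q1\<close> by (simp_all add: poly_eq_0_iff_dvd)
  have f_eq: "f u = u ^ a * poly P1 u / (u ^ b * poly Q1 u)" if "u \<in> S" for u
    using rational[OF that] Q_nonzero[OF that] by (simp add: P_eq Q_eq field_simps)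
  have "poly P1 (u * v) * poly Q1 u * poly Q1 v = poly P1 u * poly P1 v * poly Q1 (u * v)"
    if "u \<in> S" "v \<in> S" for u v
  proof -
    have "u \<noteq> 0" "v \<noteq> 0" using that \<open>0 \<notin> S\<close> by auto
    moreover have "poly Q1 u \<noteq> 0" "poly Q1 v \<noteq> 0" "poly Q1 (u * v) \<noteq> 0"
      using Q_nonzero that mult_closed by (simp_all add: Q_eq)
    ultimately show ?thesis
      using f_mult[OF that] by (simp add: f_eq that mult_closed field_simps)
  qed
  then have "poly P1 u = poly Q1 u" if "u \<in> S" for u
    using poly_eq_if_multiplicative_ratio[OF \<open>infinite S\<close> \<open>poly P1 0 \<noteq> 0\<close> \<open>poly Q1 0 \<noteq> 0\<close>] that
    by blast
  then have "f u = u powi (int a - int b)" if "u \<in> S" for u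
    using that f_eq Q_nonzero[OF that] \<open>0 \<notin> S\<close> by (auto simp: Q_eq power_int_diff)
  then show ?thesis by blast
qed

lemma maxideal_iff: "x \<in> maxideal \<longleftrightarrow> (\<forall>n\<le>0. x $$ n = 0)"
proof
  assume "\<forall>n\<le>0. x $$ n = 0"
  then show "x \<in> maxideal"
    unfolding maxideal_def using fls_subdegree_geI[of x 1] by force
qed (auto simp: maxideal_def)

lemma maxideal_add: "x \<in> maxideal \<Longrightarrow> y \<in> maxideal \<Longrightarrow> x + y \<in> maxideal"
  by (simp add: maxideal_iff)

lemma maxideal_mult:
  fixes x y :: "'a::{field,finite} fls"
  shows "x \<in> maxideal \<Longrightarrow> y \<in> maxideal \<Longrightarrow> x * y \<in> maxideal"
  unfolding maxideal_def by (cases "x = 0"; cases "y = 0") auto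

lemma maxideal_power:
  fixes x :: "'a::{field,finite} fls"
  assumes "x \<in> maxideal" "r > 0"
  shows "x ^ r \<in> maxideal"
  using \<open>r > 0\<close> by (induction r rule: nat_induct_non_zero) (auto intro: maxideal_mult assms(1))

lemma one_units_iff: "u \<in> one_units \<longleftrightarrow> u - 1 \<in> maxideal"
  unfolding one_units_def by (auto intro!: exI[of _ "u - 1"])

lemma one_plus_maxideal_nonzero:
  assumes "x \<in> maxideal" shows "1 + x \<noteq> 0"
proof
  assume "1 + x = 0"
  with assms have "(1 + x) $$ 0 = 0" "x $$ 0 = 0" by (simp_all add: maxideal_iff)
  then show False by simp
qed

lemma zero_notin_one_units: "0 \<notin> one_units"
  using one_plus_maxideal_nonzero by (auto simp: one_units_def)

lemma one_units_mult:
  fixes u v :: "'a::{field,finite} fls"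
  assumes "u \<in> one_units" "v \<in> one_units" shows "u * v \<in> one_units"
proof -
  have "u * v - 1 = (u - 1) + (v - 1) + (u - 1) * (v - 1)" by (simp add: algebra_simps)
  also have "\<dots> \<in> maxideal"
    using assms by (intro maxideal_add maxideal_mult) (simp_all add: one_units_iff)
  finally show ?thesis by (simp add: one_units_iff)
qed

lemma infinite_one_units: "infinite (one_units :: 'a::{field,finite} fls set)"
proof -
  have "inj (\<lambda>n::nat. 1 + fls_X ^ Suc n :: 'a fls)"
  proof (rule injI)
    fix m n assume "(1 + fls_X ^ Suc m :: 'a fls) = 1 + fls_X ^ Suc n"
    then have "(fls_X ^ Suc m :: 'a fls) $$ int (Suc m) = fls_X ^ Suc n $$ int (Suc m)" by simp
    then show "m = n" by (simp only: fls_X_power_nth) (simp split: if_splits)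
  qed
  moreover have "range (\<lambda>n::nat. 1 + fls_X ^ Suc n :: 'a fls) \<subseteq> one_units"
    by (auto simp: one_units_iff maxideal_iff)
  ultimately show ?thesis using range_inj_infinite infinite_super by blast
qed

lemma one_minus_maxideal_power_nonzero:
  assumes "x \<in> maxideal" "r > 0" shows "1 - x ^ r \<noteq> 0"
proof -
  have "(1 - x ^ r) $$ 0 = 1"
    using maxideal_power[OF assms] by (simp add: maxideal_iff)
  then show ?thesis by auto
qed

lemma fps_to_fls_compose_times_one_minus_X_power:
  assumes "x \<in> maxideal" and p: "A * (1 - fps_X ^ r) = fps_of_poly p"
  shows "fps_to_fls (A oo fls_regpart x) * (1 - x ^ r) = poly (map_poly fls_const p) x"
proof -
  have b0: "fls_regpart x $ 0 = 0" and regpart: "fps_to_fls (fls_regpart x) = x"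
    using assms by (auto simp: maxideal_def)
  have "fps_to_fls (A oo fls_regpart x) * (1 - x ^ r)
      = fps_to_fls (A * (1 - fps_X ^ r) oo fls_regpart x)"
    using b0 by (simp add: fps_compose_mult_distrib fps_compose_sub_distrib fls_times_fps_to_fls
        fps_to_fls_power regpart flip: fps_compose_power)
  also have "\<dots> = poly (map_poly fls_const p) x"
    using fps_to_fls_compose_fps_of_poly[OF b0, of p] by (simp add: p regpart)
  finally show ?thesis .
qed

theorem lemma2p4:
  fixes f :: "('a::{field,finite}) fls \<Rightarrow> 'a fls"
    and A :: "'a fps"
  assumes maps: "\<forall>u \<in> one_units. f u \<in> one_units"
    and hom: "\<forall>u \<in> one_units. \<forall>v \<in> one_units. f (u * v) = f u * f v"
    and loc: "locally_analytic_U f"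
    and coeffs_Fp: "\<forall>n. \<exists>k::nat. fps_nth A n = of_nat k"
    and const: "fps_nth A 0 = 1"
    and series: "\<forall>x \<in> maxideal. f (1 + x) = fps_to_fls (A oo fls_regpart x)"
    and per: "ultimately_periodic (fps_nth A)"
  shows "\<exists>N::int. \<forall>x \<in> maxideal. f (1 + x) = (1 + x) powi N"
proof -
  obtain r p where "r > 0" and p: "A * (1 - fps_X ^ r) = fps_of_poly p"
    using ultimately_periodic_times_one_minus_X_power[OF per] .
  have rational: "f (1 + x) * (1 - x ^ r) = poly (map_poly fls_const p) x"
    and denominator_nonzero: "1 - x ^ r \<noteq> 0" if "x \<in> maxideal" for x :: "'a fls"
    using series fps_to_fls_compose_times_one_minus_X_power[OF that p]
      one_minus_maxideal_power_nonzero[OF that \<open>r > 0\<close>] that by simp_all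
  define P where "P = pcompose (map_poly fls_const p) [:-1, 1:]"
  define Q :: "'a fls poly" where "Q = pcompose (1 - monom 1 r) [:-1, 1:]"
  have ratio: "f u * poly Q u = poly P u" and Q_nonzero: "poly Q u \<noteq> 0"
    if "u \<in> one_units" for u
    using rational[of "u - 1"] denominator_nonzero[of "u - 1"] that
    by (simp_all add: P_def Q_def one_units_iff poly_pcompose poly_monom)
  have f_nonzero: "f u \<noteq> 0" if "u \<in> one_units" for u
    using maps that zero_notin_one_units by metis
  have "\<exists>N::int. \<forall>u\<in>one_units. f u = u powi N"
    using hom
    by (intro multiplicative_rational_function_eq_power_int[where P = P and Q = Q,
          OF infinite_one_units one_units_mult zero_notin_one_units])
      (simp_all add: ratio Q_nonzero f_nonzero)
  then show ?thesis by (auto simp: one_units_def)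
qed

end
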